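(* Let $m\in\{1,2\}$, $\gamma\in(\gamma_\star,\gamma_1]$ and $z\in(z_1,z_M]$. Then the continuation to the right, $C:[V_8,0)\to(0,\infty)$, of the local real-analytic solution through $P_8$ satisfies $C(V)<\sqrt{-V}$ for all $V\in(V_8,0)$; in particular $C(V)\to0$ as $V\to0^-$.
   Context: Fix $m\in\{1,2\}$. For $z>0$ put $\lambda=1+m\gamma z$, $a_1=1+\frac{m(\gamma-1)}{2}$, $a_2=\frac{m(\gamma-1)+mz\gamma(\gamma-3)}{2}$, $a_3=\frac{mz\gamma(\gamma-1)}{2}$, $G(V,C;\gamma,z)=C^2[(m+1)V+2mz]-V(1+V)(\lambda+V)$, $F(V,C;\gamma,z)=C\{C^2[1+\frac{mz}{1+V}]-a_1(1+V)^2+a_2(1+V)-a_3\}$; ODE $\frac{dC}{dV}=\frac FG$. $z_M=(\sqrt\gamma+\sqrt2)^{-2}$; $w(z)=\sqrt{1-2(\gamma+2)z+(\gamma-2)^2z^2}$, $V_8=\frac{-1+(\gamma-2)z+w}{2}$, $C_8=1+V_8$, $P_8=(V_8,C_8)$. The local solution is the real-analytic solution near $V_8$ with $C(V_8)=C_8$ and $C'(V_8)$ equal to the unique negative root of $-G_Cc^2+(F_C-G_V)c+F_V=0$ (partials at $P_8$); it extends as a positive decreasing solution on $[V_8,0)$. $z_1=\frac{\sqrt5-1}{2(1+\sqrt5+\gamma)}$, $\gamma_1=1+\sqrt2$, and $\gamma_\star\approx1.7$ is the value with $\frac{\sqrt{2\gamma(\gamma-1)}}{\gamma+1}=\sqrt{\frac{2\gamma}{(2+\sqrt{2\gamma})(\gamma+1)}}$.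 *)

theory Defs
  imports "HOL-Analysis.Analysis"
begin

definition lam :: "nat \<Rightarrow> real \<Rightarrow> real \<Rightarrow> real" where
  "lam m \<gamma> z = 1 + real m * \<gamma> * z"
definition a1 :: "nat \<Rightarrow> real \<Rightarrow> real" where
  "a1 m \<gamma> = 1 + real m * (\<gamma> - 1) / 2"
definition a2 :: "nat \<Rightarrow> real \<Rightarrow> real \<Rightarrow> real" where
  "a2 m \<gamma> z = (real m * (\<gamma> - 1) + real m * z * \<gamma> * (\<gamma> - 3)) / 2"
definition a3 :: "nat \<Rightarrow> real \<Rightarrow> real \<Rightarrow> real" where
  "a3 m \<gamma> z = real m * z * \<gamma> * (\<gamma> - 1) / 2"

definition Gf :: "nat \<Rightarrow> real \<Rightarrow> real \<Rightarrow> real \<Rightarrow> real \<Rightarrow> real" where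
  "Gf m \<gamma> z V C = C^2 * ((real m + 1) * V + 2 * real m * z) - V * (1 + V) * (lam m \<gamma> z + V)"
definition Ff :: "nat \<Rightarrow> real \<Rightarrow> real \<Rightarrow> real \<Rightarrow> real \<Rightarrow> real" where
  "Ff m \<gamma> z V C = C * (C^2 * (1 + real m * z / (1 + V)) - a1 m \<gamma> * (1 + V)^2
                      + a2 m \<gamma> z * (1 + V) - a3 m \<gamma> z)"

definition zM :: "real \<Rightarrow> real" where
  "zM \<gamma> = 1 / (sqrt \<gamma> + sqrt 2)^2"
definition wf :: "real \<Rightarrow> real \<Rightarrow> real" where
  "wf \<gamma> z = sqrt (1 - 2 * (\<gamma> + 2) * z + (\<gamma> - 2)^2 * z^2)"
definition V8 :: "real \<Rightarrow> real \<Rightarrow> real" where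
  "V8 \<gamma> z = (-1 + (\<gamma> - 2) * z + wf \<gamma> z) / 2"
definition C8 :: "real \<Rightarrow> real \<Rightarrow> real" where
  "C8 \<gamma> z = 1 + V8 \<gamma> z"

definition z1 :: "real \<Rightarrow> real" where
  "z1 \<gamma> = (sqrt 5 - 1) / (2 * (1 + sqrt 5 + \<gamma>))"
definition gamma1 :: real where
  "gamma1 = 1 + sqrt 2"
definition gamma_star :: real where
  "gamma_star = (THE g. 1 < g \<and>
      sqrt (2 * g * (g - 1)) / (g + 1) = sqrt (2 * g / ((2 + sqrt (2 * g)) * (g + 1))))"

definition slope_eq :: "nat \<Rightarrow> real \<Rightarrow> real \<Rightarrow> real \<Rightarrow> bool" where
  "slope_eq m \<gamma> z c \<longleftrightarrow>
     (let V0 = V8 \<gamma> z; C0 = C8 \<gamma> z;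
          GC = deriv (\<lambda>C. Gf m \<gamma> z V0 C) C0;
          GV = deriv (\<lambda>V. Gf m \<gamma> z V C0) V0;
          FC = deriv (\<lambda>C. Ff m \<gamma> z V0 C) C0;
          FV = deriv (\<lambda>V. Ff m \<gamma> z V C0) V0
      in - GC * c^2 + (FC - GV) * c + FV = 0)"

definition continued_solution :: "nat \<Rightarrow> real \<Rightarrow> real \<Rightarrow> (real \<Rightarrow> real) \<Rightarrow> bool" where
  "continued_solution m \<gamma> z C \<longleftrightarrow>
     (\<exists>r>0. \<exists>a :: nat \<Rightarrow> real. \<forall>V\<in>{V8 \<gamma> z..<V8 \<gamma> z + r}.
         (\<lambda>n. a n * (V - V8 \<gamma> z)^n) sums C V) \<and>
     C (V8 \<gamma> z) = C8 \<gamma> z \<and>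
     (\<exists>c. c < 0 \<and> slope_eq m \<gamma> z c \<and>
          (C has_real_derivative c) (at (V8 \<gamma> z) within {V8 \<gamma> z..<0})) \<and>
     (\<forall>V\<in>{V8 \<gamma> z..<0}. 0 < C V) \<and>
     (\<forall>x y. V8 \<gamma> z \<le> x \<longrightarrow> x \<le> y \<longrightarrow> y < 0 \<longrightarrow> C y \<le> C x) \<and>
     (\<forall>V\<in>{V8 \<gamma> z<..<0}. Gf m \<gamma> z V (C V) \<noteq> 0 \<and>
          (C has_real_derivative Ff m \<gamma> z V (C V) / Gf m \<gamma> z V (C V)) (at V))"

end

theory Submission
  imports Defs
begin

text \<open>Let h(V) = C(V)^2 + V. The hypothesis z > z1 puts C8 below the golden section
  (\<surd>5 - 1)/2, which is exactly h(V8) = C8^2 + C8 - 1 < 0. If h vanished somewhere in (V8, 0), at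
  its first zero the solution would meet the parabola C^2 = -V from below. On that parabola, with
  x = 1 + V, the ODE gives x G h' = (1 - x) P(x) for a cubic P, with G > 0. P is decreasing on
  [3/5, 1] and negative at x = 1 - C8^2 (a polynomial identity plus elementary bounds in s = C8),
  so h' < 0 at the first zero, which is absurd. Hence C^2 < -V on (V8, 0), and C tends to 0 by
  squeezing.\<close>

lemma power_le_scaled:
  fixes s c :: real
  assumes "0 \<le> s" "s \<le> c" "j \<le> k"
  shows "s ^ k \<le> c ^ (k - j) * s ^ j"
proof -
  have "s ^ k = s ^ (k - j) * s ^ j" using assms(3) by (simp flip: power_add)
  also have "\<dots> \<le> c ^ (k - j) * s ^ j" using assms by (intro mult_right_mono power_mono) auto
  finally show ?thesis .
qed

lemma interpolation_pos:
  fixes A B a b g :: real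
  assumes "0 < A" "0 < B" "a \<le> g" "g \<le> b" "a < b"
  shows "0 < (b - g) * A + (g - a) * B"
proof (cases "g < b")
  case True
  then have "0 < (b - g) * A" using assms by simp
  moreover have "0 \<le> (g - a) * B" using assms by simp
  ultimately show ?thesis by linarith
next
  case False
  then show ?thesis using assms by (cases "a = g") auto
qed

lemma negative_if_zeros_descending:
  fixes h :: "real \<Rightarrow> real"
  assumes cont: "continuous_on {a..<b} h" and "h a < 0"
    and descending: "\<And>t. a < t \<Longrightarrow> t < b \<Longrightarrow> h t = 0 \<Longrightarrow> \<exists>d<0. (h has_real_derivative d) (at t)"
  shows "\<forall>t\<in>{a..<b}. h t < 0"
proof (rule ccontr)
  assume "\<not> (\<forall>t\<in>{a..<b}. h t < 0)"
  then obtain t1 where t1: "a \<le> t1" "t1 < b" "0 \<le> h t1" by auto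
  have cont1: "continuous_on {a..t1} h" by (rule continuous_on_subset[OF cont]) (use t1 in auto)
  define Z where "Z = {t \<in> {a..t1}. h t = 0}"
  have "closed Z" unfolding Z_def using cont1 by (intro continuous_closed_preimage_constant) auto
  moreover have "bounded Z" unfolding Z_def by (rule bounded_subset[of "{a..t1}"]) auto
  ultimately have "compact Z" by (simp add: compact_eq_bounded_closed)
  have "\<exists>t\<ge>a. t \<le> t1 \<and> h t = 0"
    using \<open>h a < 0\<close> t1 cont1 by (intro IVT') auto
  then have "Z \<noteq> {}" unfolding Z_def by auto
  then obtain t0 where t0: "t0 \<in> Z" and least: "\<forall>t\<in>Z. t0 \<le> t"
    using compact_attains_inf[OF \<open>compact Z\<close>] by blast
  have ht0: "h t0 = 0" "a \<le> t0" "t0 \<le> t1" using t0 unfolding Z_def by auto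
  moreover have "a \<noteq> t0" using \<open>h a < 0\<close> ht0 by auto
  ultimately have "a < t0" by simp
  have below: "h t < 0" if "a \<le> t" "t < t0" for t
  proof (rule ccontr)
    assume "\<not> h t < 0"
    moreover have "continuous_on {a..t} h"
      by (rule continuous_on_subset[OF cont1]) (use that ht0 in auto)
    ultimately have "\<exists>t'\<ge>a. t' \<le> t \<and> h t' = 0"
      using \<open>h a < 0\<close> that by (intro IVT') auto
    then obtain t' where "a \<le> t'" "t' \<le> t" "h t' = 0" by blast
    then have "t' \<in> Z" using that ht0 unfolding Z_def by auto
    then show False using least \<open>t' \<le> t\<close> \<open>t < t0\<close> by fastforce
  qed
  obtain d where "d < 0" "(h has_real_derivative d) (at t0)"
    using descending \<open>a < t0\<close> ht0 t1 by (meson le_less_trans)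
  then obtain e where "0 < e" and e: "\<And>s. 0 < s \<Longrightarrow> s < e \<Longrightarrow> h t0 < h (t0 - s)"
    using DERIV_neg_dec_left by blast
  define s where "s = min e (t0 - a) / 2"
  have "0 < s" "s < e" "s < t0 - a" unfolding s_def using \<open>0 < e\<close> \<open>a < t0\<close> by auto
  then have "h t0 < h (t0 - s)" "h (t0 - s) < 0" using e below by auto
  then show False using ht0 by linarith
qed

lemma tendsto_0_at_left_0_if_below_sqrt:
  fixes f :: "real \<Rightarrow> real"
  assumes "a < 0" "\<And>V. a < V \<Longrightarrow> V < 0 \<Longrightarrow> 0 \<le> f V \<and> f V \<le> sqrt (- V)"
  shows "(f \<longlongrightarrow> 0) (at_left 0)"
proof (rule tendsto_sandwich[where f = "\<lambda>_. 0" and h = "\<lambda>V. sqrt (- V)"])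
  have near: "eventually (\<lambda>V. a < V \<and> V < 0) (at_left (0::real))"
    using eventually_at_left_real[OF \<open>a < 0\<close>] by simp
  show "eventually (\<lambda>V. 0 \<le> f V) (at_left 0)"
    by (rule eventually_mono[OF near]) (use assms(2) in auto)
  show "eventually (\<lambda>V. f V \<le> sqrt (- V)) (at_left 0)"
    by (rule eventually_mono[OF near]) (use assms(2) in auto)
  show "((\<lambda>_. 0) \<longlongrightarrow> (0::real)) (at_left 0)" by simp
  have "((\<lambda>V. sqrt (- V)) \<longlongrightarrow> sqrt (- 0)) (at_left (0::real))" by (intro tendsto_intros)
  then show "((\<lambda>V. sqrt (- V)) \<longlongrightarrow> 0) (at_left (0::real))" by simp
qed

section \<open>The parameter range and the point P8\<close>

lemma gamma_star_equation_iff: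
  fixes g :: real
  assumes "1 < g"
  shows "sqrt (2 * g * (g - 1)) / (g + 1) = sqrt (2 * g / ((2 + sqrt (2 * g)) * (g + 1)))
     \<longleftrightarrow> (g - 1) * (2 + sqrt (2 * g)) = g + 1"
proof -
  define r where "r = sqrt (2 * g)"
  have nz: "(g + 1)^2 \<noteq> 0" "(2 + r) * (g + 1) \<noteq> 0"
    using assms by (auto simp: r_def add_nonneg_eq_0_iff)
  have "sqrt (2 * g * (g - 1)) / (g + 1) = sqrt (2 * g * (g - 1) / (g + 1)^2)"
    using assms by (simp add: real_sqrt_divide)
  then have "sqrt (2 * g * (g - 1)) / (g + 1) = sqrt (2 * g / ((2 + r) * (g + 1)))
      \<longleftrightarrow> (2 * g * (g - 1)) * ((2 + r) * (g + 1)) = (2 * g) * (g + 1)^2"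
    using nz by (simp add: frac_eq_eq)
  also have "\<dots> \<longleftrightarrow> (2 * g * (g + 1)) * ((g - 1) * (2 + r)) = (2 * g * (g + 1)) * (g + 1)"
    by (simp add: power2_eq_square algebra_simps)
  also have "\<dots> \<longleftrightarrow> (g - 1) * (2 + r) = g + 1"
    using assms by simp
  finally show ?thesis unfolding r_def .
qed

lemma gamma_star_gt_1: "1 < gamma_star"
proof -
  define k where "k g = (g - 1) * (2 + sqrt (2 * g)) - (g + 1)" for g :: real
  have k_mono: "k g1 < k g2" if "1 < g1" "g1 < g2" for g1 g2
  proof -
    have "(g1 - 1) * sqrt (2 * g1) \<le> (g2 - 1) * sqrt (2 * g2)"
      using that by (intro mult_mono) auto
    then show ?thesis unfolding k_def using that by (simp add: algebra_simps)
  qed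
  have "continuous_on {1..2} k" unfolding k_def by (intro continuous_intros)
  moreover have k12: "k 1 = -2" "k 2 = 1" unfolding k_def by simp_all
  ultimately obtain g0 where "1 \<le> g0" "k g0 = 0"
    using IVT'[of k 1 0 2] by auto
  moreover from this have "g0 \<noteq> 1" using k12 by auto
  ultimately have g0: "1 < g0" "k g0 = 0" by auto
  have equation_iff: "1 < g \<and> sqrt (2 * g * (g - 1)) / (g + 1)
        = sqrt (2 * g / ((2 + sqrt (2 * g)) * (g + 1))) \<longleftrightarrow> 1 < g \<and> k g = 0" for g
    using gamma_star_equation_iff[of g] unfolding k_def by auto
  have "\<exists>!g. 1 < g \<and> k g = 0"
  proof (rule ex1I)
    show "1 < g0 \<and> k g0 = 0" using g0 ..
    show "g = g0" if "1 < g \<and> k g = 0" for g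
      using that g0 k_mono[of g g0] k_mono[of g0 g] by (cases g g0 rule: linorder_cases) auto
  qed
  then have "\<exists>!g. 1 < g \<and> sqrt (2 * g * (g - 1)) / (g + 1)
        = sqrt (2 * g / ((2 + sqrt (2 * g)) * (g + 1)))"
    unfolding equation_iff .
  from theI'[OF this] show ?thesis unfolding gamma_star_def by blast
qed

lemma gamma1_le_5_2: "gamma1 \<le> 5/2"
proof -
  have "sqrt 2 \<le> sqrt ((3/2)^2)" by (simp add: power2_eq_square)
  then show ?thesis unfolding gamma1_def by simp
qed

definition golden_inv :: real where
  "golden_inv = (sqrt 5 - 1) / 2"

lemma golden_inv_sq: "golden_inv^2 = 1 - golden_inv"
  unfolding golden_inv_def by (simp add: power2_eq_square field_simps)

lemma golden_inv_bounds: "309/500 < golden_inv" "golden_inv < 31/50"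
proof -
  have "sqrt ((559/250)^2) < sqrt 5" "sqrt 5 < sqrt ((56/25)^2)"
    by (simp_all only: real_sqrt_less_iff) (simp_all add: power2_eq_square)
  then show "309/500 < golden_inv" "golden_inv < 31/50"
    unfolding golden_inv_def by simp_all
qed

lemma golden_inv_quadratic_neg:
  assumes "0 < s" "s < golden_inv"
  shows "s^2 + s - 1 < 0"
proof -
  have "s^2 < golden_inv^2" using assms by (simp add: power_strict_mono)
  then show ?thesis using assms golden_inv_sq by linarith
qed

lemma z1_pos: "0 < g \<Longrightarrow> 0 < z1 g"
  unfolding z1_def by (simp add: add_pos_pos)

text \<open>z1 is the value of z at which golden_inv solves the quadratic of C8, so that P8 lies on the
  parabola C^2 = -V; it is also where the parabola factor of G vanishes at x = golden_inv.\<close>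

lemma z1_golden_inv:
  assumes "0 < g"
  shows "z1 g * (g - (g - 2) * golden_inv) = 2 * golden_inv - 1"
    and "z1 g * (g * golden_inv + 2) = 1 - golden_inv"
proof -
  define r where "r = sqrt 5"
  have r2: "r^2 = 5" unfolding r_def by simp
  have "0 < r" unfolding r_def by simp
  then have nz: "1 + r + g \<noteq> 0" using assms by linarith
  show "z1 g * (g - (g - 2) * golden_inv) = 2 * golden_inv - 1"
    "z1 g * (g * golden_inv + 2) = 1 - golden_inv"
    unfolding z1_def golden_inv_def r_def[symmetric] using r2 nz
    by (simp_all add: field_simps power2_eq_square)
qed

lemma zM_le_quarter:
  assumes "1 \<le> g"
  shows "zM g \<le> 1/4"
proof -
  have "1 \<le> sqrt g" "1 \<le> sqrt 2" using assms by auto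
  then have "2 \<le> sqrt g + sqrt 2" by linarith
  then have "2^2 \<le> (sqrt g + sqrt 2)^2" by (rule power_mono) simp
  then show ?thesis unfolding zM_def by (intro divide_left_mono) auto
qed

lemma wf_radicand_nonneg:
  assumes "0 < g" "0 \<le> z" "z \<le> zM g"
  shows "0 \<le> 1 - 2 * (g + 2) * z + (g - 2)^2 * z^2"
proof -
  define a b where "a = sqrt g" and "b = sqrt 2"
  have ab: "0 < a" "0 < b" "a^2 = g" "b^2 = 2" using assms(1) by (auto simp: a_def b_def)
  have "z * (a + b)^2 \<le> 1"
    using assms(3) ab unfolding zM_def a_def[symmetric] b_def[symmetric] by (simp add: field_simps)
  moreover have "z * (a - b)^2 \<le> z * (a + b)^2"
    using assms(2) ab by (intro mult_left_mono) (auto simp: power2_eq_square algebra_simps)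
  ultimately have "0 \<le> (1 - z * (a + b)^2) * (1 - z * (a - b)^2)" by simp
  also have "\<dots> = 1 - 2 * (a^2 + b^2) * z + (a^2 - b^2)^2 * z^2"
    by (simp add: power2_eq_square algebra_simps)
  finally show ?thesis using ab by simp
qed

lemma C8_quadratic:
  assumes "0 < g" "0 \<le> z" "z \<le> zM g"
  shows "(C8 g z)^2 - (1 + (g - 2) * z) * C8 g z + g * z = 0"
proof -
  have "(wf g z)^2 = 1 - 2 * (g + 2) * z + (g - 2)^2 * z^2"
    unfolding wf_def using wf_radicand_nonneg[OF assms] by simp
  then show ?thesis unfolding C8_def V8_def by (simp add: power2_eq_square field_simps)
qed

lemma convex_comb_g_2_pos:
  fixes g s :: real
  assumes "0 < g" "0 \<le> s" "s < 1"
  shows "0 < g - (g - 2) * s"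
proof -
  have "g - (g - 2) * s = (1 - s) * g + s * 2" by (simp add: algebra_simps)
  moreover have "0 < (1 - s) * g" using assms by simp
  ultimately show ?thesis using assms by linarith
qed

lemma C8_bounds:
  assumes g: "1 < g" "g \<le> 5/2" and z: "z1 g < z" "z \<le> zM g"
  shows "0 < C8 g z" "C8 g z < golden_inv"
proof -
  define s p where "s = C8 g z" and "p = 1 + (g - 2) * z"
  have "0 < z" using z z1_pos[of g] g by linarith
  moreover have "z \<le> 1/4" using z zM_le_quarter[of g] g by linarith
  ultimately have "(-1) * z \<le> (g - 2) * z" "(g - 2) * z \<le> 1/2 * (1/4)"
    using g by (intro mult_right_mono mult_mono; simp)+
  then have p: "3/4 \<le> p" "p \<le> 9/8" using \<open>z \<le> 1/4\<close> unfolding p_def by auto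
  have s_eq: "s = (p + wf g z) / 2" unfolding s_def C8_def V8_def p_def by (simp add: field_simps)
  have "0 \<le> wf g z" unfolding wf_def using wf_radicand_nonneg g z \<open>0 < z\<close> by simp
  then show "0 < C8 g z" using p unfolding s_def[symmetric] s_eq by simp
  have root: "s^2 - p * s + g * z = 0"
    using C8_quadratic g z \<open>0 < z\<close> unfolding s_def p_def by simp
  have "z1 g * (g - (g - 2) * golden_inv) < z * (g - (g - 2) * golden_inv)"
    using z convex_comb_g_2_pos[of g golden_inv] g golden_inv_bounds by simp
  then have q_golden: "0 < golden_inv^2 - p * golden_inv + g * z"
    using z1_golden_inv(1)[of g] g golden_inv_sq unfolding p_def by (simp add: algebra_simps)
  show "C8 g z < golden_inv"
  proof (rule ccontr)
    assume "\<not> C8 g z < golden_inv"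
    then have "0 \<le> (s - golden_inv) * (s + golden_inv - p)"
      using p golden_inv_bounds unfolding s_def by (intro mult_nonneg_nonneg) auto
    also have "\<dots> = (s^2 - p * s + g * z) - (golden_inv^2 - p * golden_inv + g * z)"
      by (simp add: power2_eq_square algebra_simps)
    finally show False using root q_golden by linarith
  qed
qed

section \<open>The ODE on the parabola C^2 = -V\<close>

definition crossing_poly :: "real \<Rightarrow> real \<Rightarrow> real \<Rightarrow> real \<Rightarrow> real" where
  "crossing_poly mm g z x = - (1 + mm * (g - 1)) * x^3 + (mm * g - 1 + mm * z * g * (g - 2)) * x^2
     + (1 - mm - mm * z * g * (g - 1)) * x + 2 * mm * z"

definition crossing_G :: "real \<Rightarrow> real \<Rightarrow> real \<Rightarrow> real \<Rightarrow> real" where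
  "crossing_G mm g z x = x^2 + (mm + 1 + mm * g * z) * x - (mm + 1) + 2 * mm * z"

lemma Gf_on_parabola:
  assumes "c^2 = 1 - x"
  shows "Gf m g z (x - 1) c = (1 - x) * crossing_G (real m) g z x"
  unfolding Gf_def lam_def crossing_G_def assms by (simp add: algebra_simps power2_eq_square)

lemma Ff_Gf_on_parabola:
  assumes "c^2 = 1 - x" "x \<noteq> 0"
  shows "x * (2 * c * Ff m g z (x - 1) c + Gf m g z (x - 1) c) = (1 - x) * crossing_poly (real m) g z x"
proof -
  have "2 * c * Ff m g z (x - 1) c
      = 2 * c^2 * (c^2 * (1 + real m * z / x) - a1 m g * x^2 + a2 m g z * x - a3 m g z)"
    unfolding Ff_def by (simp add: power2_eq_square algebra_simps)
  then show ?thesis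
    unfolding Gf_on_parabola[OF assms(1)] assms(1) crossing_G_def crossing_poly_def a1_def a2_def a3_def
    using assms(2) by (simp add: field_simps power2_eq_square power3_eq_cube)
qed

lemma slope_on_parabola_neg:
  assumes "c^2 = 1 - x" "0 < x" "x < 1"
    and "crossing_poly (real m) g z x < 0" "0 < crossing_G (real m) g z x"
  shows "2 * c * (Ff m g z (x - 1) c / Gf m g z (x - 1) c) + 1 < 0"
proof -
  have G: "0 < Gf m g z (x - 1) c"
    using assms by (simp add: Gf_on_parabola)
  have "x * (2 * c * Ff m g z (x - 1) c + Gf m g z (x - 1) c) < 0"
    using assms by (simp add: Ff_Gf_on_parabola mult_pos_neg)
  then have "2 * c * Ff m g z (x - 1) c + Gf m g z (x - 1) c < 0"
    using \<open>0 < x\<close> by (simp add: mult_less_0_iff)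
  then show ?thesis using G by (simp add: field_simps)
qed

lemma crossing_G_pos:
  assumes "0 < mm" "0 < g" "z1 g < z" "golden_inv \<le> x"
  shows "0 < crossing_G mm g z x"
proof -
  have "0 < z" using assms z1_pos[of g] by linarith
  have "0 \<le> (x - golden_inv) * (x + golden_inv + (mm + 1 + mm * g * z))"
    using assms \<open>0 < z\<close> golden_inv_bounds by (intro mult_nonneg_nonneg) auto
  also have "\<dots> = crossing_G mm g z x - crossing_G mm g z golden_inv"
    unfolding crossing_G_def by (simp add: power2_eq_square algebra_simps)
  finally have "crossing_G mm g z golden_inv \<le> crossing_G mm g z x" by simp
  moreover have "crossing_G mm g z golden_inv = mm * (z * (g * golden_inv + 2) - (1 - golden_inv))"
    unfolding crossing_G_def golden_inv_sq by (simp add: algebra_simps)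
  then have "crossing_G mm g z golden_inv = mm * ((z - z1 g) * (g * golden_inv + 2))"
    unfolding z1_golden_inv(2)[OF assms(2), symmetric] by (simp add: algebra_simps)
  moreover have "0 < mm * ((z - z1 g) * (g * golden_inv + 2))"
    using assms golden_inv_bounds by (intro mult_pos_pos add_pos_pos) auto
  ultimately show ?thesis by linarith
qed

lemma crossing_poly_antimono:
  assumes m: "1 \<le> mm" "mm \<le> 2" and g: "1 < g" "g \<le> 5/2" and z: "0 \<le> z"
    and x: "3/5 \<le> x0" "x0 \<le> x" "x \<le> 1"
  shows "crossing_poly mm g z x \<le> crossing_poly mm g z x0"
proof -
  define u S k where "u = x + x0" and "S = x^2 + x * x0 + x0^2" and "k = 1 + mm * (g - 1)"
  define br where "br = - k * S + (mm * g - 1) * u + (1 - mm) + mm * z * g * ((g - 2) * u - (g - 1))"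
  have diff: "crossing_poly mm g z x - crossing_poly mm g z x0 = (x - x0) * br"
    unfolding crossing_poly_def br_def u_def S_def k_def
    by (simp add: algebra_simps power2_eq_square power3_eq_cube)
  have u: "6/5 \<le> u" "u \<le> 2" using x unfolding u_def by auto
  have "0 \<le> mm * (g - 1)" "mm * (g - 1) \<le> mm * (3/2)" using m g by (auto intro: mult_left_mono)
  then have k: "0 < k" "k \<le> 1 + 3/2 * mm" unfolding k_def by linarith+
  have "(g - 2) * u \<le> g - 1"
  proof (cases "g \<le> 2")
    case True
    then have "(g - 2) * u \<le> 0" using u by (simp add: mult_nonpos_nonneg)
    then show ?thesis using g by linarith
  next
    case False
    then have "(g - 2) * u \<le> (g - 2) * 2" using u by (intro mult_left_mono) auto
    also have "\<dots> \<le> g - 1" using g by simp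
    finally show ?thesis .
  qed
  then have z_term: "mm * z * g * ((g - 2) * u - (g - 1)) \<le> 0"
    using m z g by (intro mult_nonneg_nonpos) auto
  have "S - 3/4 * u^2 = (x - x0)^2 / 4"
    unfolding S_def u_def by (simp add: power2_eq_square algebra_simps)
  moreover have "0 \<le> (x - x0)^2 / 4" by simp
  ultimately have "3/4 * u^2 \<le> S" by linarith
  then have "k * (3/4 * u^2) \<le> k * S" using k by (intro mult_left_mono) auto
  moreover have "(mm * g - 1) * u = k * u + (mm - 2) * u" unfolding k_def by (simp add: algebra_simps)
  ultimately have "br \<le> k * (u - 3/4 * u^2) + (mm - 2) * u + 1 - mm"
    unfolding br_def using z_term by (simp add: algebra_simps)
  also have "\<dots> \<le> k * (3/25) + (mm - 2) * (6/5) + 1 - mm"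
  proof -
    have "u - 3/4 * u^2 - 3/25 = - 3/4 * ((u - 6/5) * (u - 2/15))"
      by (simp add: power2_eq_square algebra_simps)
    moreover have "0 \<le> (u - 6/5) * (u - 2/15)" using u by simp
    ultimately have "u - 3/4 * u^2 \<le> 3/25" by linarith
    then have "k * (u - 3/4 * u^2) \<le> k * (3/25)" using k by (intro mult_left_mono) auto
    moreover have "(mm - 2) * u \<le> (mm - 2) * (6/5)"
      using m u by (intro mult_left_mono_neg) auto
    ultimately show ?thesis by linarith
  qed
  also have "\<dots> < 0" using k m by argo
  finally have "(x - x0) * br \<le> 0" using x by (simp add: mult_nonneg_nonpos)
  then show ?thesis using diff by linarith
qed

section \<open>The cubic at x = 1 - C8^2\<close>

text \<open>Eliminating z through z (\<gamma> - (\<gamma> - 2) s) = s (1 - s), the relation satisfied by s = C8,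
  turns (\<gamma> - (\<gamma> - 2) s) P(1 - s^2), with P = \<open>crossing_poly m\<close>, into (s^2 + s - 1) R1 s \<gamma>
  for m = 1 and into (s^2 + s - 1) R2 s \<gamma> for m = 2.\<close>

definition R1 :: "real \<Rightarrow> real \<Rightarrow> real" where
 "R1 s g = g + s*g + 2* s^2 - s^2*g - s^2*g^2 - 2* s^3 - 3* s^3*g + s^3*g^2 + s^4*g^2 + 2* s^5*g - s^5*g^2"
definition R2 :: "real \<Rightarrow> real \<Rightarrow> real" where
 "R2 s g = g - 2* s + 2* s*g + 2* s^2 + s^2*g - 2* s^2*g^2 - 7* s^3*g + 2* s^3*g^2 + 2* s^4 - 2* s^4*g + 2* s^4*g^2 - 2* s^5 + 5* s^5*g - 2* s^5*g^2"

lemma R1_pos_at_1: assumes "0 \<le> s" "s \<le> 31/50" shows "0 < R1 s 1"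
proof -
  have "s ^ 3 \<le> 961/2500 * s" using power_le_scaled[OF assms, of 1 3] by (simp add: power2_eq_square)
  moreover have "0 \<le> s ^ 4" "0 \<le> s ^ 5" using assms by simp_all
  moreover have "R1 s 1 = 1 + s - 4 * s^3 + s^4 + s^5" unfolding R1_def by simp
  ultimately show ?thesis using assms by linarith
qed

lemma R1_pos_at_5_2: assumes "0 \<le> s" "s \<le> 31/50" shows "0 < R1 s (5/2)"
proof -
  have "s ^ 2 \<le> 31/50 * s" "s ^ 3 \<le> 961/2500 * s" "s ^ 5 \<le> 31/50 * s ^ 4"
    using power_le_scaled[OF assms, of 1 2] power_le_scaled[OF assms, of 1 3]
      power_le_scaled[OF assms, of 4 5] by (simp_all add: power2_eq_square)
  moreover have "0 \<le> s ^ 4" using assms by simp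
  moreover have "R1 s (5/2) = 5/2 + 5/2 * s - 27/4 * s^2 - 13/4 * s^3 + 25/4 * s^4 - 5/4 * s^5"
    unfolding R1_def by (simp add: power2_eq_square)
  ultimately show ?thesis using assms by linarith
qed

lemma R2_pos_at_1: assumes "0 \<le> s" "s \<le> 31/50" shows "0 < R2 s 1"
proof -
  have "s ^ 2 \<le> 961/2500" "s ^ 3 \<le> 31/50 * s ^ 2"
    using power_le_scaled[OF assms, of 0 2] power_le_scaled[OF assms, of 2 3] by (simp_all add: power2_eq_square)
  moreover have "0 \<le> s ^ 4" "0 \<le> s ^ 5" using assms by simp_all
  moreover have "R2 s 1 = 1 + s^2 - 5 * s^3 + 2 * s^4 + s^5" unfolding R2_def by simp
  ultimately show ?thesis using assms by linarith
qed

lemma R2_pos_at_5_2: assumes "0 \<le> s" "s \<le> 31/50" shows "0 < R2 s (5/2)"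
proof -
  have "s ^ 2 \<le> 31/50 * s" "s ^ 3 \<le> 961/2500 * s" "s ^ 5 \<le> 31/50 * s ^ 4"
    using power_le_scaled[OF assms, of 1 2] power_le_scaled[OF assms, of 1 3]
      power_le_scaled[OF assms, of 4 5] by (simp_all add: power2_eq_square)
  moreover have "0 \<le> s ^ 4" using assms by simp
  moreover have "R2 s (5/2) = 5/2 + 3 * s - 8 * s^2 - 5 * s^3 + 19/2 * s^4 - 2 * s^5"
    unfolding R2_def by (simp add: power2_eq_square)
  ultimately show ?thesis using assms by linarith
qed

lemma R1_pos:
  assumes "0 \<le> s" "s \<le> 31/50" "1 \<le> g" "g \<le> 5/2"
  shows "0 < R1 s g"
proof -
  have "R1 s g = s^2 * (1 - s)^2 * (1 + s) * ((g - 1) * (5/2 - g))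
      + 2/3 * ((5/2 - g) * R1 s 1 + (g - 1) * R1 s (5/2))"
    unfolding R1_def by (simp add: field_simps power2_eq_square power3_eq_cube eval_nat_numeral)
  moreover have "0 \<le> s^2 * (1 - s)^2 * (1 + s) * ((g - 1) * (5/2 - g))" using assms by simp
  moreover have "0 < (5/2 - g) * R1 s 1 + (g - 1) * R1 s (5/2)"
    using assms by (intro interpolation_pos R1_pos_at_1 R1_pos_at_5_2) auto
  ultimately show ?thesis by (metis add_nonneg_pos mult_pos_pos zero_less_divide_iff zero_less_numeral)
qed

lemma R2_pos:
  assumes "0 \<le> s" "s \<le> 31/50" "1 \<le> g" "g \<le> 5/2"
  shows "0 < R2 s g"
proof -
  have "R2 s g = 2 * s^2 * (1 - s)^2 * (1 + s) * ((g - 1) * (5/2 - g))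
      + 2/3 * ((5/2 - g) * R2 s 1 + (g - 1) * R2 s (5/2))"
    unfolding R2_def by (simp add: field_simps power2_eq_square power3_eq_cube eval_nat_numeral)
  moreover have "0 \<le> 2 * s^2 * (1 - s)^2 * (1 + s) * ((g - 1) * (5/2 - g))" using assms by simp
  moreover have "0 < (5/2 - g) * R2 s 1 + (g - 1) * R2 s (5/2)"
    using assms by (intro interpolation_pos R2_pos_at_1 R2_pos_at_5_2) auto
  ultimately show ?thesis by (metis add_nonneg_pos mult_pos_pos zero_less_divide_iff zero_less_numeral)
qed

lemma crossing_poly_neg_at:
  assumes m: "mm = 1 \<or> mm = 2" and g: "1 < g" "g \<le> 5/2"
    and s: "0 < s" "s < golden_inv" and z: "z * (g - (g - 2) * s) = s * (1 - s)"
  shows "crossing_poly mm g z (1 - s^2) < 0"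
proof -
  define D where "D = g - (g - 2) * s"
  have D: "0 < D" unfolding D_def using convex_comb_g_2_pos g s golden_inv_bounds by simp
  have s2: "s^2 + s - 1 < 0" using golden_inv_quadratic_neg[OF s] .
  have zD: "z * D = s * (1 - s)" using z unfolding D_def .
  define x where "x = 1 - s^2"
  have "D * crossing_poly mm g z x
      = D * (- (1 + mm * (g - 1)) * x^3 + (mm * g - 1) * x^2 + (1 - mm) * x)
        + mm * (s * (1 - s)) * (g * (g - 2) * x^2 - g * (g - 1) * x + 2)"
    unfolding crossing_poly_def zD[symmetric] by (simp add: algebra_simps)
  also have "\<dots> = (s^2 + s - 1) * (if mm = 1 then R1 s g else R2 s g)"
    using m unfolding D_def x_def R1_def R2_def
    by (auto simp: field_simps power2_eq_square power3_eq_cube eval_nat_numeral)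
  finally have "D * crossing_poly mm g z (1 - s^2) = (s^2 + s - 1) * (if mm = 1 then R1 s g else R2 s g)"
    unfolding x_def .
  moreover have "0 < (if mm = 1 then R1 s g else R2 s g)"
    using R1_pos R2_pos s g golden_inv_bounds by simp
  ultimately have "D * crossing_poly mm g z (1 - s^2) < 0" using s2 by (simp add: mult_neg_pos)
  then show ?thesis using D by (simp add: mult_less_0_iff)
qed

section \<open>The solution stays below the parabola\<close>

lemma parabola_crossing_slope_neg:
  assumes m: "m = 1 \<or> m = 2" and g: "1 < g" "g \<le> 5/2" and z: "z1 g < z" "z \<le> zM g"
    and c: "0 < c" "c \<le> C8 g z" "c^2 = - V"
  shows "2 * c * (Ff m g z V c / Gf m g z V c) + 1 < 0"
proof -
  define s x where "s = C8 g z" and "x = 1 + V"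
  have s: "0 < s" "s < golden_inv" using C8_bounds[OF g z] unfolding s_def by auto
  have "0 < z" using z z1_pos[of g] g by linarith
  have c2: "c^2 = 1 - x" using c unfolding x_def by simp
  have "c^2 \<le> s^2" using c unfolding s_def by (intro power_mono) auto
  then have x0: "1 - s^2 \<le> x" using c2 by linarith
  have "s^2 \<le> (31/50)^2" using s golden_inv_bounds by (intro power_mono) auto
  then have x35: "3/5 \<le> 1 - s^2" by (simp add: power2_eq_square)
  have "s^2 < golden_inv^2" using s by (simp add: power_strict_mono)
  then have x_golden: "golden_inv \<le> x" using x0 golden_inv_sq by linarith
  have "0 < c^2" using c(1) by simp
  then have x1: "x < 1" using c2 by linarith
  have "z * (g - (g - 2) * s) = s * (1 - s)"
    using C8_quadratic[of g z] g z \<open>0 < z\<close> unfolding s_def by (simp add: algebra_simps power2_eq_square)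
  then have "crossing_poly (real m) g z x < 0"
    using crossing_poly_antimono[of "real m" g z "1 - s^2" x] crossing_poly_neg_at[of "real m" g s z]
      m g s \<open>0 < z\<close> x0 x35 x1 by auto
  moreover have "0 < crossing_G (real m) g z x"
    using crossing_G_pos[of "real m" g z x] m g z x_golden by auto
  ultimately show ?thesis
    using slope_on_parabola_neg[OF c2] x1 x_golden golden_inv_bounds unfolding x_def by auto
qed

lemma continued_solution_continuous:
  assumes "continued_solution m g z C"
  shows "continuous_on {V8 g z..<0} C"
proof -
  from assms obtain c where c: "(C has_real_derivative c) (at (V8 g z) within {V8 g z..<0})"
    and ode: "\<And>V. V \<in> {V8 g z<..<0} \<Longrightarrow>
      (C has_real_derivative Ff m g z V (C V) / Gf m g z V (C V)) (at V)"
    unfolding continued_solution_def by blast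
  show ?thesis
  proof (rule DERIV_continuous_on)
    fix V assume V: "V \<in> {V8 g z..<0}"
    show "(C has_real_derivative (if V = V8 g z then c else Ff m g z V (C V) / Gf m g z V (C V)))
        (at V within {V8 g z..<0})"
    proof (cases "V = V8 g z")
      case False
      with V have "V \<in> {V8 g z<..<0}" by auto
      with False show ?thesis using ode by (simp add: has_field_derivative_at_within)
    qed (use c in simp)
  qed
qed

lemma continued_solution_crossing_descends:
  assumes m: "m = 1 \<or> m = 2" and g: "1 < g" "g \<le> 5/2" and z: "z1 g < z" "z \<le> zM g"
    and C: "continued_solution m g z C"
    and t: "V8 g z < t" "t < 0" "(C t)^2 = - t"
  shows "\<exists>d<0. ((\<lambda>V. (C V)^2 + V) has_real_derivative d) (at t)"
proof -
  from C have "C (V8 g z) = C8 g z" and "0 < C t" and "C t \<le> C (V8 g z)"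
    and "(C has_real_derivative Ff m g z t (C t) / Gf m g z t (C t)) (at t)"
    using t unfolding continued_solution_def by auto
  then have "((\<lambda>V. (C V)^2 + V) has_real_derivative 2 * C t * (Ff m g z t (C t) / Gf m g z t (C t)) + 1) (at t)"
    and "2 * C t * (Ff m g z t (C t) / Gf m g z t (C t)) + 1 < 0"
    using parabola_crossing_slope_neg[OF m g z, of "C t" t] t by (auto intro!: derivative_eq_intros)
  then show ?thesis by blast
qed

theorem mainTheorem18:
  fixes m :: nat and \<gamma> z :: real and C :: "real \<Rightarrow> real"
  assumes "m = 1 \<or> m = 2"
    and "gamma_star < \<gamma>" and "\<gamma> \<le> gamma1"
    and "z1 \<gamma> < z" and "z \<le> zM \<gamma>"
    and "continued_solution m \<gamma> z C"
  shows "(\<forall>V\<in>{V8 \<gamma> z<..<0}. C V < sqrt (- V)) \<and> (C \<longlongrightarrow> 0) (at_left 0)"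
proof -
  have g: "1 < \<gamma>" "\<gamma> \<le> 5/2" using gamma_star_gt_1 gamma1_le_5_2 assms(2,3) by linarith+
  define a s where "a = V8 \<gamma> z" and "s = C8 \<gamma> z"
  have s: "0 < s" "s < golden_inv" using C8_bounds[OF g assms(4,5)] unfolding s_def by auto
  have a: "a = s - 1" unfolding a_def s_def C8_def by simp
  have below_parabola: "\<forall>V\<in>{a..<0}. (C V)^2 + V < 0"
  proof (rule negative_if_zeros_descending)
    show "continuous_on {a..<0} (\<lambda>V. (C V)^2 + V)"
      using continued_solution_continuous[OF assms(6)] unfolding a_def by (intro continuous_intros)
    have "C a = s" using assms(6) unfolding continued_solution_def a_def s_def by blast
    then show "(C a)^2 + a < 0" using golden_inv_quadratic_neg[OF s] a by simp
  qed (use continued_solution_crossing_descends[OF assms(1) g assms(4-6)] a_def in auto)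
  have below: "C V < sqrt (- V)" if "V \<in> {a<..<0}" for V
  proof (rule real_less_rsqrt)
    have "(C V)^2 + V < 0" using below_parabola that by simp
    then show "(C V)^2 < - V" by linarith
  qed
  moreover have "0 < C V" if "V \<in> {a<..<0}" for V
    using assms(6) that unfolding continued_solution_def a_def by auto
  moreover have "a < 0" using a s golden_inv_bounds by linarith
  ultimately have "(C \<longlongrightarrow> 0) (at_left 0)"
    by (intro tendsto_0_at_left_0_if_below_sqrt[of a]) (auto intro: less_imp_le)
  then show ?thesis using below unfolding a_def by blast
qed

end
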